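(* Let $\alpha>0$, let $X_{0-}$ be a real-valued random variable and let $Z$ be a continuous stochastic process with $Z_0=0$, independent of $X_{0-}$. Fix $\Delta>0$. For $\ell\in M$ set $X^\Delta_t[\ell]=X_{0-}+Z_{\Delta\lfloor t/\Delta\rfloor}-\alpha\ell_{\Delta\lfloor t/\Delta\rfloor}$, $\tau^\Delta[\ell]=\inf\{t\ge0:X^\Delta_t[\ell]\le0\}$ and $\Gamma_\Delta[\ell]_t=\mathbb{P}(\tau^\Delta[\ell]\le t)$. Let $\ell^n,\ell\in M$ with $\ell^n_{\Delta\lfloor\cdot/\Delta\rfloor}\to\ell_{\Delta\lfloor\cdot/\Delta\rfloor}$ in $M$ and $\ell^n_0=\ell_0$ for all $n$. Assume in addition that either $\operatorname{law}(X_{0-})$ is atomless or $\operatorname{law}(Z_t)$ is atomless for every $t>0$. Then $\lim_{n\to\infty}\Gamma_\Delta[\ell^n]=\Gamma_\Delta[\ell]$ in $M$.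
   Context: $M$ is the set of càdlàg increasing functions $\ell:\overline{\mathbb{R}}\to[0,1]$ ($\overline{\mathbb{R}}$ the two-point compactification of $\mathbb{R}$) with $\ell_{0-}=0$ and $\ell_\infty=1$, with the topology: $\ell^n\to\ell$ iff $\ell^n_t\to\ell_t$ for all $t\in[0,\infty]$ at which $\ell$ is continuous. *)

theory Defs
  imports "HOL-Probability.Probability"
begin

definition inM :: "(ereal \<Rightarrow> real) \<Rightarrow> bool" where
  "inM l \<longleftrightarrow> mono l \<and> (\<forall>t. 0 \<le> l t \<and> l t \<le> 1)
     \<and> (\<forall>t. continuous (at_right t) l)
     \<and> (\<forall>t. \<exists>L. (l \<longlongrightarrow> L) (at_left t))
     \<and> (l \<longlongrightarrow> 0) (at_left 0)
     \<and> l \<infinity> = 1"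

definition Mconv :: "(nat \<Rightarrow> ereal \<Rightarrow> real) \<Rightarrow> (ereal \<Rightarrow> real) \<Rightarrow> bool" where
  "Mconv ls l \<longleftrightarrow> (\<forall>t::ereal. 0 \<le> t \<longrightarrow> isCont l t \<longrightarrow> (\<lambda>n. ls n t) \<longlonglongrightarrow> l t)"

definition disc :: "real \<Rightarrow> ereal \<Rightarrow> ereal" where
  "disc \<Delta> t = (case t of ereal r \<Rightarrow> ereal (\<Delta> * of_int \<lfloor>r / \<Delta>\<rfloor>) | _ \<Rightarrow> t)"

definition XD :: "real \<Rightarrow> real \<Rightarrow> ('a \<Rightarrow> real) \<Rightarrow> (real \<Rightarrow> 'a \<Rightarrow> real)
    \<Rightarrow> (ereal \<Rightarrow> real) \<Rightarrow> real \<Rightarrow> 'a \<Rightarrow> real" where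
  "XD \<alpha> \<Delta> X0 Z l t \<omega> =
     X0 \<omega> + Z (\<Delta> * of_int \<lfloor>t / \<Delta>\<rfloor>) \<omega> - \<alpha> * l (ereal (\<Delta> * of_int \<lfloor>t / \<Delta>\<rfloor>))"

definition tauD :: "real \<Rightarrow> real \<Rightarrow> ('a \<Rightarrow> real) \<Rightarrow> (real \<Rightarrow> 'a \<Rightarrow> real)
    \<Rightarrow> (ereal \<Rightarrow> real) \<Rightarrow> 'a \<Rightarrow> ereal" where
  "tauD \<alpha> \<Delta> X0 Z l \<omega> = Inf {ereal t | t. 0 \<le> t \<and> XD \<alpha> \<Delta> X0 Z l t \<omega> \<le> 0}"

definition GammaD :: "'a measure \<Rightarrow> real \<Rightarrow> real \<Rightarrow> ('a \<Rightarrow> real) \<Rightarrow> (real \<Rightarrow> 'a \<Rightarrow> real)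
    \<Rightarrow> (ereal \<Rightarrow> real) \<Rightarrow> ereal \<Rightarrow> real" where
  "GammaD P \<alpha> \<Delta> X0 Z l t = measure P {\<omega> \<in> space P. tauD \<alpha> \<Delta> X0 Z l \<omega> \<le> t}"

end

theory Submission
  imports Defs
begin

(* For r \<ge> 0, tauD \<le> r holds iff the walk X0 + Z(j\<Delta>) lies below \<alpha> l(j\<Delta>) at one of the
   finitely many grid points j\<Delta> \<le> r, so Gamma(r) is the probability of a finite union of
   threshold events. The midpoint of each grid cell is a continuity point of l \<circ> disc, so the
   thresholds \<alpha> ls n (j\<Delta>) converge. For j \<ge> 1 independence and the atomless hypothesis make
   the boundary {X0 + Z(j\<Delta>) = \<alpha> l(j\<Delta>)} null, and for j = 0 the thresholds agree; hence
   the indicators converge almost surely and dominated convergence gives convergence at every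
   t \<ge> 0, not only at continuity points. *)

lemma floor_div_bounds:
  fixes t \<Delta> :: real
  assumes "\<Delta> > 0"
  shows "\<Delta> * of_int \<lfloor>t / \<Delta>\<rfloor> \<le> t" "t < \<Delta> * (of_int \<lfloor>t / \<Delta>\<rfloor> + 1)"
proof -
  have "\<Delta> * of_int \<lfloor>t / \<Delta>\<rfloor> \<le> \<Delta> * (t / \<Delta>)" "\<Delta> * (t / \<Delta>) < \<Delta> * (of_int \<lfloor>t / \<Delta>\<rfloor> + 1)"
    using assms by (intro mult_left_mono mult_strict_left_mono; linarith)+
  with assms show "\<Delta> * of_int \<lfloor>t / \<Delta>\<rfloor> \<le> t" "t < \<Delta> * (of_int \<lfloor>t / \<Delta>\<rfloor> + 1)"
    by simp_all
qed

lemma (in prob_space) indep_var_commute: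
  "indep_var S X T Y \<Longrightarrow> indep_var T Y S X"
  unfolding indep_var_eq indep_sets2_eq by (fastforce simp: Int_commute mult.commute)

lemma (in prob_space) indep_set_mono:
  "indep_set A B \<Longrightarrow> A' \<subseteq> A \<Longrightarrow> B' \<subseteq> B \<Longrightarrow> indep_set A' B'"
  unfolding indep_set_def by (rule indep_sets_mono_sets) (auto split: bool.split)

lemma sets_vimage_algebra_component_subset:
  assumes "s \<in> I" "(\<lambda>\<omega>. restrict (\<lambda>t. Z t \<omega>) I) \<in> \<Omega> \<rightarrow> space (Pi\<^sub>M I (\<lambda>_. T))"
  shows "sets (vimage_algebra \<Omega> (Z s) T)
    \<subseteq> sets (vimage_algebra \<Omega> (\<lambda>\<omega>. restrict (\<lambda>t. Z t \<omega>) I) (Pi\<^sub>M I (\<lambda>_. T)))"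
proof -
  have "(\<lambda>\<omega>. restrict (\<lambda>t. Z t \<omega>) I s)
      \<in> measurable (vimage_algebra \<Omega> (\<lambda>\<omega>. restrict (\<lambda>t. Z t \<omega>) I) (Pi\<^sub>M I (\<lambda>_. T))) T"
    using assms by (intro measurable_compose[OF measurable_vimage_algebra1 measurable_component_singleton])
  with assms(1) show ?thesis
    by (intro sets_image_in_sets) simp_all
qed

lemma (in prob_space) indep_var_process_component:
  assumes X: "random_variable S X" and Z: "random_variable S (Z s)"
    and ind: "indep_set (sets (vimage_algebra (space M) X S))
      (sets (vimage_algebra (space M) (\<lambda>\<omega>. restrict (\<lambda>t. Z t \<omega>) I) (Pi\<^sub>M I (\<lambda>_. S))))"
    and s: "s \<in> I" and space: "\<And>t \<omega>. t \<in> I \<Longrightarrow> \<omega> \<in> space M \<Longrightarrow> Z t \<omega> \<in> space S"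
  shows "indep_var S X S (Z s)"
proof -
  have "sets (vimage_algebra (space M) (Z s) S)
      \<subseteq> sets (vimage_algebra (space M) (\<lambda>\<omega>. restrict (\<lambda>t. Z t \<omega>) I) (Pi\<^sub>M I (\<lambda>_. S)))"
    using s space by (intro sets_vimage_algebra_component_subset) (auto simp: space_PiM)
  with ind have "indep_set (sets (vimage_algebra (space M) X S)) (sets (vimage_algebra (space M) (Z s) S))"
    by (rule indep_set_mono[OF _ order_refl])
  with X Z show ?thesis
    by (simp add: indep_var_eq sets_vimage_algebra)
qed

lemma (in prob_space) indep_var_prob_add_eq_const_zero_left:
  fixes X Y :: "'a \<Rightarrow> real"
  assumes ind: "indep_var borel X borel Y"
    and atomless: "\<And>x. measure (distr M borel X) {x} = 0"
  shows "prob {\<omega>\<in>space M. X \<omega> + Y \<omega> = c} = 0"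
proof -
  have rv[measurable]: "X \<in> borel_measurable M" "Y \<in> borel_measurable M"
    using ind by (auto simp: indep_var_distribution_eq)
  have distr_pair: "distr M (borel \<Otimes>\<^sub>M borel) (\<lambda>\<omega>. (X \<omega>, Y \<omega>)) = distr M borel X \<Otimes>\<^sub>M distr M borel Y"
    using ind by (simp add: indep_var_distribution_eq)
  interpret DX: prob_space "distr M borel X" by (simp add: prob_space_distr)
  interpret DY: prob_space "distr M borel Y" by (simp add: prob_space_distr)
  interpret pair_prob_space "distr M borel X" "distr M borel Y" ..
  define D where "D = {p \<in> space (borel \<Otimes>\<^sub>M borel). fst p + snd p = (c::real)}"
  have D: "D \<in> sets (borel \<Otimes>\<^sub>M borel)" unfolding D_def by measurable
  have "{\<omega>\<in>space M. X \<omega> + Y \<omega> = c} = (\<lambda>\<omega>. (X \<omega>, Y \<omega>)) -` D \<inter> space M"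
    unfolding D_def by (auto simp: space_pair_measure)
  then have "emeasure M {\<omega>\<in>space M. X \<omega> + Y \<omega> = c}
      = emeasure (distr M (borel \<Otimes>\<^sub>M borel) (\<lambda>\<omega>. (X \<omega>, Y \<omega>))) D"
    using D by (simp add: emeasure_distr)
  also have "\<dots> = emeasure (distr M borel X \<Otimes>\<^sub>M distr M borel Y) D"
    by (simp add: distr_pair)
  also have "\<dots> = (\<integral>\<^sup>+y. emeasure (distr M borel X) ((\<lambda>x. (x, y)) -` D) \<partial>distr M borel Y)"
    using D by (intro emeasure_pair_measure_alt2) simp
  also have "\<dots> = 0"
  proof -
    have "(\<lambda>x. (x, y)) -` D = {c - y}" for y
      unfolding D_def by (auto simp: space_pair_measure)
    then show ?thesis
      using atomless by (simp add: DX.emeasure_eq_measure)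
  qed
  finally show ?thesis by (simp add: measure_def)
qed

lemma (in prob_space) indep_var_prob_add_eq_const_zero:
  fixes X Y :: "'a \<Rightarrow> real"
  assumes "indep_var borel X borel Y"
    and "(\<forall>x. measure (distr M borel X) {x} = 0) \<or> (\<forall>y. measure (distr M borel Y) {y} = 0)"
  shows "prob {\<omega>\<in>space M. X \<omega> + Y \<omega> = c} = 0"
  using assms indep_var_prob_add_eq_const_zero_left[of Y X] indep_var_prob_add_eq_const_zero_left[of X Y]
  by (auto simp: add.commute dest: indep_var_commute)

lemma (in prob_space) indep_process_prob_add_eq_const_zero:
  fixes X :: "'a \<Rightarrow> real" and Z :: "real \<Rightarrow> 'a \<Rightarrow> real"
  assumes X: "random_variable borel X" and Z: "\<And>t. 0 \<le> t \<Longrightarrow> random_variable borel (Z t)"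
    and ind: "indep_set (sets (vimage_algebra (space M) X borel))
      (sets (vimage_algebra (space M) (\<lambda>\<omega>. restrict (\<lambda>t. Z t \<omega>) {0..}) (Pi\<^sub>M {0..} (\<lambda>_. borel))))"
    and atomless: "(\<forall>x. measure (distr M borel X) {x} = 0)
      \<or> (\<forall>t>0. \<forall>x. measure (distr M borel (Z t)) {x} = 0)"
    and s: "s > 0"
  shows "prob {\<omega>\<in>space M. X \<omega> + Z s \<omega> = c} = 0"
proof -
  have "indep_var borel X borel (Z s)"
    using X Z ind s by (intro indep_var_process_component[where I="{0..}"]) auto
  with atomless s show ?thesis
    by (auto intro!: indep_var_prob_add_eq_const_zero)
qed

lemma (in prob_space) prob_tendsto_of_AE_eventually_eq:
  assumes "\<And>n. A n \<in> events" "A' \<in> events"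
    and "AE \<omega> in M. eventually (\<lambda>n. \<omega> \<in> A n \<longleftrightarrow> \<omega> \<in> A') sequentially"
  shows "(\<lambda>n. prob (A n)) \<longlonglongrightarrow> prob A'"
proof -
  have "(\<lambda>n. integral\<^sup>L M (indicator (A n))) \<longlonglongrightarrow> integral\<^sup>L M (indicator A' :: 'a \<Rightarrow> real)"
  proof (rule integral_dominated_convergence[where w="\<lambda>_. 1"])
    show "AE \<omega> in M. (\<lambda>n. indicator (A n) \<omega> :: real) \<longlonglongrightarrow> indicator A' \<omega>"
      using assms(3) by eventually_elim
        (auto intro: tendsto_eventually elim: eventually_mono simp: indicator_def)
  qed (use assms in \<open>auto simp: indicator_def\<close>)
  then show ?thesis
    using assms by (simp add: Int_absorb2 sets.sets_into_space)
qed

lemma eventually_le_iff_of_tendsto: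
  fixes x :: real
  assumes "c \<longlonglongrightarrow> c'" "x \<noteq> c'"
  shows "eventually (\<lambda>n. x \<le> c n \<longleftrightarrow> x \<le> c') sequentially"
proof (cases "x < c'")
  case True
  from order_tendstoD(1)[OF assms(1) True] show ?thesis
    by eventually_elim (use True in auto)
next
  case False
  with assms(2) have "c' < x" by simp
  from order_tendstoD(2)[OF assms(1) this] show ?thesis
    by eventually_elim (use \<open>c' < x\<close> in auto)
qed

lemma (in prob_space) prob_exists_le_tendsto:
  fixes Y :: "'i \<Rightarrow> 'a \<Rightarrow> real" and c :: "nat \<Rightarrow> 'i \<Rightarrow> real"
  assumes J: "finite J" and Y: "\<And>j. j \<in> J \<Longrightarrow> random_variable borel (Y j)"
    and c: "\<And>j. j \<in> J \<Longrightarrow> (\<lambda>n. c n j) \<longlonglongrightarrow> c' j"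
    and boundary: "\<And>j. j \<in> J \<Longrightarrow> (\<forall>n. c n j = c' j) \<or> prob {\<omega>\<in>space M. Y j \<omega> = c' j} = 0"
  shows "(\<lambda>n. prob {\<omega>\<in>space M. \<exists>j\<in>J. Y j \<omega> \<le> c n j})
    \<longlonglongrightarrow> prob {\<omega>\<in>space M. \<exists>j\<in>J. Y j \<omega> \<le> c' j}"
proof (rule prob_tendsto_of_AE_eventually_eq)
  have "AE \<omega> in M. (\<forall>n. c n j = c' j) \<or> Y j \<omega> \<noteq> c' j" if "j \<in> J" for j
  proof (cases "\<forall>n. c n j = c' j")
    case False
    with boundary that have "{\<omega>\<in>space M. Y j \<omega> = c' j} \<in> null_sets M"
      using Y[OF that] by (auto simp: emeasure_eq_measure null_sets_def)
    then show ?thesis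
      by (rule AE_I') auto
  qed simp
  with J have "AE \<omega> in M. \<forall>j\<in>J. (\<forall>n. c n j = c' j) \<or> Y j \<omega> \<noteq> c' j"
    by (simp add: AE_finite_all)
  then show "AE \<omega> in M. eventually (\<lambda>n. \<omega> \<in> {\<omega>\<in>space M. \<exists>j\<in>J. Y j \<omega> \<le> c n j}
      \<longleftrightarrow> \<omega> \<in> {\<omega>\<in>space M. \<exists>j\<in>J. Y j \<omega> \<le> c' j}) sequentially"
  proof eventually_elim
    case (elim \<omega>)
    have "eventually (\<lambda>n. Y j \<omega> \<le> c n j \<longleftrightarrow> Y j \<omega> \<le> c' j) sequentially" if "j \<in> J" for j
      using elim that eventually_le_iff_of_tendsto[OF c[OF that]] by auto
    with J have "eventually (\<lambda>n. \<forall>j\<in>J. Y j \<omega> \<le> c n j \<longleftrightarrow> Y j \<omega> \<le> c' j) sequentially"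
      by (simp add: eventually_ball_finite)
    then show ?case
      by eventually_elim auto
  qed
qed (use J Y in measurable)

lemma XD_grid_point:
  "\<Delta> > 0 \<Longrightarrow>
    XD \<alpha> \<Delta> X0 Z l (\<Delta> * real j) \<omega> = X0 \<omega> + Z (\<Delta> * real j) \<omega> - \<alpha> * l (ereal (\<Delta> * real j))"
  by (simp add: XD_def)

lemma XD_eq_XD_grid_point:
  assumes "\<Delta> > 0" "0 \<le> t"
  shows "XD \<alpha> \<Delta> X0 Z l t \<omega> = XD \<alpha> \<Delta> X0 Z l (\<Delta> * real (nat \<lfloor>t / \<Delta>\<rfloor>)) \<omega>"
  using assms by (simp add: XD_def)

lemma tauD_le_grid_point:
  assumes "\<Delta> > 0" "X0 \<omega> + Z (\<Delta> * real j) \<omega> \<le> \<alpha> * l (ereal (\<Delta> * real j))"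
  shows "tauD \<alpha> \<Delta> X0 Z l \<omega> \<le> ereal (\<Delta> * real j)"
  unfolding tauD_def using assms by (intro Inf_lower) (auto simp: XD_grid_point)

lemma tauD_ge_grid_point:
  assumes \<Delta>: "\<Delta> > 0"
    and above: "\<And>j. j \<le> K \<Longrightarrow> \<alpha> * l (ereal (\<Delta> * real j)) < X0 \<omega> + Z (\<Delta> * real j) \<omega>"
  shows "ereal (\<Delta> * real (Suc K)) \<le> tauD \<alpha> \<Delta> X0 Z l \<omega>"
  unfolding tauD_def
proof (rule Inf_greatest, clarify)
  fix t assume t: "0 \<le> t" "XD \<alpha> \<Delta> X0 Z l t \<omega> \<le> 0"
  define k where "k = nat \<lfloor>t / \<Delta>\<rfloor>"
  have "\<not> k \<le> K"
    using t above[of k] by (auto simp: k_def XD_eq_XD_grid_point[OF \<Delta>] XD_grid_point[OF \<Delta>])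
  then have "\<Delta> * real (Suc K) \<le> \<Delta> * real k"
    using \<Delta> by simp
  also have "\<Delta> * real k \<le> t"
    using floor_div_bounds(1)[OF \<Delta>, of t] \<Delta> t(1) by (simp add: k_def)
  finally show "ereal (\<Delta> * real (Suc K)) \<le> ereal t" by simp
qed

lemma tauD_le_iff:
  assumes \<Delta>: "\<Delta> > 0" and r: "0 \<le> r"
  shows "tauD \<alpha> \<Delta> X0 Z l \<omega> \<le> ereal r \<longleftrightarrow>
    (\<exists>j\<in>{..nat \<lfloor>r / \<Delta>\<rfloor>}. X0 \<omega> + Z (\<Delta> * real j) \<omega> \<le> \<alpha> * l (ereal (\<Delta> * real j)))"
    (is "_ \<longleftrightarrow> (\<exists>j\<in>{..?K}. _)")
proof
  assume le: "tauD \<alpha> \<Delta> X0 Z l \<omega> \<le> ereal r"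
  show "\<exists>j\<in>{..?K}. X0 \<omega> + Z (\<Delta> * real j) \<omega> \<le> \<alpha> * l (ereal (\<Delta> * real j))"
  proof (rule ccontr)
    assume "\<not> ?thesis"
    then have "ereal (\<Delta> * real (Suc ?K)) \<le> tauD \<alpha> \<Delta> X0 Z l \<omega>"
      by (intro tauD_ge_grid_point[OF \<Delta>]) (auto simp: not_le)
    then have "ereal (\<Delta> * real (Suc ?K)) \<le> ereal r"
      using le by (rule order_trans)
    moreover have "r < \<Delta> * real (Suc ?K)"
      using floor_div_bounds(2)[OF \<Delta>, of r] \<Delta> r by (simp add: add.commute)
    ultimately show False
      by simp
  qed
next
  assume "\<exists>j\<in>{..?K}. X0 \<omega> + Z (\<Delta> * real j) \<omega> \<le> \<alpha> * l (ereal (\<Delta> * real j))"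
  then obtain j where "j \<le> ?K" "X0 \<omega> + Z (\<Delta> * real j) \<omega> \<le> \<alpha> * l (ereal (\<Delta> * real j))"
    by auto
  moreover have "\<Delta> * real j \<le> r"
  proof -
    have "real j \<le> of_int \<lfloor>r / \<Delta>\<rfloor>"
      using \<open>j \<le> ?K\<close> \<Delta> r by (simp add: le_nat_iff)
    then have "\<Delta> * real j \<le> \<Delta> * of_int \<lfloor>r / \<Delta>\<rfloor>"
      using \<Delta> by simp
    with floor_div_bounds(1)[OF \<Delta>, of r] show ?thesis
      by linarith
  qed
  ultimately show "tauD \<alpha> \<Delta> X0 Z l \<omega> \<le> ereal r"
    by (metis tauD_le_grid_point[OF \<Delta>] ereal_less_eq(3) order_trans)
qed

lemma GammaD_eq_grid:
  assumes "\<Delta> > 0" "0 \<le> r"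
  shows "GammaD P \<alpha> \<Delta> X0 Z l (ereal r) = measure P {\<omega>\<in>space P.
    \<exists>j\<in>{..nat \<lfloor>r / \<Delta>\<rfloor>}. X0 \<omega> + Z (\<Delta> * real j) \<omega> \<le> \<alpha> * l (ereal (\<Delta> * real j))}"
  using assms by (simp add: GammaD_def tauD_le_iff)

lemma disc_eq_grid_point:
  assumes \<Delta>: "\<Delta> > 0" and s: "\<Delta> * real j \<le> s" "s < \<Delta> * real (Suc j)"
  shows "disc \<Delta> (ereal s) = ereal (\<Delta> * real j)"
proof -
  have "real j \<le> s / \<Delta>" "s / \<Delta> < real j + 1"
    using \<Delta> s by (simp_all add: field_simps)
  then have "\<lfloor>s / \<Delta>\<rfloor> = int j"
    by (simp add: floor_eq_iff)
  then show ?thesis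
    by (simp add: disc_def)
qed

lemma Mconv_disc_imp_tendsto_grid_point:
  assumes \<Delta>: "\<Delta> > 0" and conv: "Mconv (\<lambda>n. ls n \<circ> disc \<Delta>) (l \<circ> disc \<Delta>)"
  shows "(\<lambda>n. ls n (ereal (\<Delta> * real j))) \<longlonglongrightarrow> l (ereal (\<Delta> * real j))"
proof -
  define cell where "cell = {ereal (\<Delta> * real j) <..< ereal (\<Delta> * real (Suc j))}"
  define t where "t = ereal (\<Delta> * real j + \<Delta> / 2)"
  have cell: "open cell" "t \<in> cell" "0 \<le> t"
    using \<Delta> by (auto simp: cell_def t_def algebra_simps)
  have disc_cell: "disc \<Delta> y = ereal (\<Delta> * real j)" if "y \<in> cell" for y
    using that \<Delta> by (cases y) (auto simp: cell_def intro: disc_eq_grid_point)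
  have "eventually (\<lambda>y. (l \<circ> disc \<Delta>) y = (l \<circ> disc \<Delta>) t) (at t)"
    using eventually_nhds_in_open[OF cell(1,2)]
    by (auto simp: disc_cell cell(2) eventually_at_filter elim: eventually_mono)
  then have "isCont (l \<circ> disc \<Delta>) t"
    unfolding isCont_def by (rule tendsto_eventually)
  with conv cell(3) have "(\<lambda>n. (ls n \<circ> disc \<Delta>) t) \<longlonglongrightarrow> (l \<circ> disc \<Delta>) t"
    unfolding Mconv_def by blast
  then show ?thesis
    by (simp add: disc_cell cell(2))
qed

theorem lemma2p4:
  fixes P :: "'a measure" and \<alpha> \<Delta> :: real and X0 :: "'a \<Rightarrow> real"
    and Z :: "real \<Rightarrow> 'a \<Rightarrow> real" and ls :: "nat \<Rightarrow> ereal \<Rightarrow> real" and l :: "ereal \<Rightarrow> real"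
  assumes "prob_space P"
    and "\<alpha> > 0" and "\<Delta> > 0"
    and "X0 \<in> borel_measurable P"
    and "\<And>t. 0 \<le> t \<Longrightarrow> Z t \<in> borel_measurable P"
    and "\<And>\<omega>. \<omega> \<in> space P \<Longrightarrow> continuous_on {0..} (\<lambda>t. Z t \<omega>)"
    and "\<And>\<omega>. \<omega> \<in> space P \<Longrightarrow> Z 0 \<omega> = 0"
    and "prob_space.indep_set P (sets (vimage_algebra (space P) X0 borel))
           (sets (vimage_algebra (space P) (\<lambda>\<omega>. restrict (\<lambda>t. Z t \<omega>) {0..})
              (Pi\<^sub>M {0..} (\<lambda>_. borel))))"
    and "\<And>n. inM (ls n)" and "inM l"
    and "Mconv (\<lambda>n. ls n \<circ> disc \<Delta>) (l \<circ> disc \<Delta>)"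
    and "\<And>n. ls n 0 = l 0"
    and "(\<forall>x. measure (distr P borel X0) {x} = 0)
         \<or> (\<forall>t>0. \<forall>x. measure (distr P borel (Z t)) {x} = 0)"
  shows "Mconv (\<lambda>n. GammaD P \<alpha> \<Delta> X0 Z (ls n)) (GammaD P \<alpha> \<Delta> X0 Z l)"
proof -
  interpret prob_space P by fact
  have [measurable]: "Z (\<Delta> * real j) \<in> borel_measurable P" for j :: nat
    using assms(3,5) by simp
  have boundary: "(\<forall>n. \<alpha> * ls n (ereal (\<Delta> * real j)) = \<alpha> * l (ereal (\<Delta> * real j)))
      \<or> prob {\<omega>\<in>space P. X0 \<omega> + Z (\<Delta> * real j) \<omega> = \<alpha> * l (ereal (\<Delta> * real j))} = 0" for j
    \<comment> \<open>the atomless hypothesis on \<open>Z t\<close> only covers \<open>t > 0\<close>; at \<open>j = 0\<close> we use \<open>ls n 0 = l 0\<close>\<close>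
    using assms by (cases "j = 0")
      (auto simp: zero_ereal_def intro!: indep_process_prob_add_eq_const_zero)
  have at_real: "(\<lambda>n. GammaD P \<alpha> \<Delta> X0 Z (ls n) (ereal r)) \<longlonglongrightarrow> GammaD P \<alpha> \<Delta> X0 Z l (ereal r)"
    if "0 \<le> r" for r
    unfolding GammaD_eq_grid[OF assms(3) that] using boundary assms(4)
    by (intro prob_exists_le_tendsto tendsto_mult_left Mconv_disc_imp_tendsto_grid_point[OF assms(3,11)])
      auto
  show ?thesis
    unfolding Mconv_def
  proof (intro allI impI)
    fix t :: ereal
    assume "0 \<le> t"
    then show "(\<lambda>n. GammaD P \<alpha> \<Delta> X0 Z (ls n) t) \<longlonglongrightarrow> GammaD P \<alpha> \<Delta> X0 Z l t"
      using at_real by (cases t) (auto simp: GammaD_def)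
  qed
qed

end
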